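(* Let $A$ be a nonempty subset of a real vector space $X$, and let $\{A_i\}_{i\in I}$ be the convex components of $A$, i.e. the pairwise distinct maximal convex subsets of $A$ (whose union is $A$). Then $$int_c(A)=\bigcup_{i\in I}cor(A_i).$$
   Context: For $A\subseteq X$, $cor(A):=\{x\in A:\ \forall x'\in X\ \exists \lambda'>0 \text{ such that } x+\lambda x'\in A \text{ for all } \lambda\in[0,\lambda']\}$. The core convex topology $\tau_c$ on $X$ is the topology whose open sets are exactly the unions of families of sets $B\subseteq X$ that are convex and satisfy $cor(B)=B$. $int_c(A)$ denotes the interior of $A$ with respect to $\tau_c$. *)

theory Defs
  imports "HOL-Analysis.Analysis"
begin

definition cor :: "'a::real_vector set \<Rightarrow> 'a set" where
  "cor A = {x \<in> A. \<forall>x'. \<exists>l'>0. \<forall>l\<in>{0..l'}. x + l *\<^sub>R x' \<in> A}"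

definition core_convex_open :: "'a::real_vector set \<Rightarrow> bool" where
  "core_convex_open U \<longleftrightarrow>
     (\<exists>F. (\<forall>B\<in>F. convex B \<and> cor B = B) \<and> U = \<Union>F)"

lemma cor_Int_fixed:
  assumes "cor B = B" "cor C = C"
  shows "cor (B \<inter> C) = B \<inter> C"
proof
  show "cor (B \<inter> C) \<subseteq> B \<inter> C" unfolding cor_def by auto
next
  show "B \<inter> C \<subseteq> cor (B \<inter> C)"
  proof
    fix x assume x: "x \<in> B \<inter> C"
    have "\<exists>l'>0. \<forall>l\<in>{0..l'}. x + l *\<^sub>R x' \<in> B \<inter> C" for x'
    proof -
      from x assms obtain a where a: "a > 0" "\<forall>l\<in>{0..a}. x + l *\<^sub>R x' \<in> B"
        unfolding cor_def by blast
      from x assms obtain b where b: "b > 0" "\<forall>l\<in>{0..b}. x + l *\<^sub>R x' \<in> C"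
        unfolding cor_def by blast
      show ?thesis using a b by (intro exI[of _ "min a b"]) auto
    qed
    then show "x \<in> cor (B \<inter> C)" using x unfolding cor_def by blast
  qed
qed

lemma istopology_core_convex_open: "istopology core_convex_open"
  unfolding istopology_def
proof safe
  fix S T :: "'a set"
  assume "core_convex_open S" "core_convex_open T"
  then obtain F G where F: "\<forall>B\<in>F. convex B \<and> cor B = B" "S = \<Union>F"
    and G: "\<forall>B\<in>G. convex B \<and> cor B = B" "T = \<Union>G"
    unfolding core_convex_open_def by blast
  let ?H = "{B \<inter> C | B C. B \<in> F \<and> C \<in> G}"
  have "\<forall>D\<in>?H. convex D \<and> cor D = D"
  proof
    fix D assume "D \<in> ?H"
    then obtain B C where BC: "D = B \<inter> C" "B \<in> F" "C \<in> G" by blast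
    have cB: "convex B" "cor B = B" using F(1) BC(2) by auto
    have cC: "convex C" "cor C = C" using G(1) BC(3) by auto
    show "convex D \<and> cor D = D"
      unfolding BC(1) using convex_Int[OF cB(1) cC(1)] cor_Int_fixed[OF cB(2) cC(2)] by blast
  qed
  moreover have "S \<inter> T = \<Union>?H" unfolding F(2) G(2) by blast
  ultimately show "core_convex_open (S \<inter> T)"
    unfolding core_convex_open_def by blast
next
  fix K :: "'a set set"
  assume K: "\<forall>S\<in>K. core_convex_open S"
  then have "\<forall>S\<in>K. \<exists>F. (\<forall>B\<in>F. convex B \<and> cor B = B) \<and> S = \<Union>F"
    unfolding core_convex_open_def by blast
  then obtain f where f: "\<forall>S\<in>K. (\<forall>B\<in>f S. convex B \<and> cor B = B) \<and> S = \<Union>(f S)"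
    by (rule bchoice[THEN exE]) blast
  have "\<forall>B\<in>\<Union>(f ` K). convex B \<and> cor B = B" using f by blast
  moreover have "\<Union>K = \<Union>(\<Union>(f ` K))"
  proof -
    have eq: "\<And>S. S \<in> K \<Longrightarrow> S = \<Union>(f S)" using f by blast
    have "\<Union>K = (\<Union>S\<in>K. \<Union>(f S))" using eq by (rule SUP_cong[OF refl, of K id, simplified])
    then show ?thesis by auto
  qed
  ultimately show "core_convex_open (\<Union>K)" unfolding core_convex_open_def
    by (intro exI[of _ "\<Union>(f ` K)"]) simp
qed

definition core_convex_topology :: "'a::real_vector topology" where
  "core_convex_topology = topology core_convex_open"

lemma openin_core_convex_topology:
  "openin core_convex_topology U \<longleftrightarrow> core_convex_open U"
  unfolding core_convex_topology_def
  by (simp add: topology_inverse'[OF istopology_core_convex_open])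

definition int_c :: "'a::real_vector set \<Rightarrow> 'a set" where
  "int_c A = core_convex_topology interior_of A"

definition convex_components :: "'a::real_vector set \<Rightarrow> 'a set set" where
  "convex_components A =
     {C. C \<subseteq> A \<and> convex C \<and> (\<forall>D. convex D \<and> C \<subseteq> D \<and> D \<subseteq> A \<longrightarrow> D = C)}"

end

theory Submission
  imports Defs
begin

text \<open>The core of a convex set is convex and equal to its own core, so it is \<open>\<tau>\<^sub>c\<close>-open.
  Conversely every \<open>\<tau>\<^sub>c\<close>-open subset of \<open>A\<close> is a union of convex sets \<open>B = cor B \<subseteq> A\<close>;
  by Zorn each such \<open>B\<close> lies in a convex component \<open>C\<close>, and then \<open>B = cor B \<subseteq> cor C\<close>.\<close>

lemma cor_subset: "cor A \<subseteq> A"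
  unfolding cor_def by auto

lemma cor_mono: "A \<subseteq> B \<Longrightarrow> cor A \<subseteq> cor B"
  unfolding cor_def by blast

lemma convex_cor_segment:
  assumes C: "convex C" and x: "x \<in> cor C" and y: "y \<in> C" and t: "0 \<le> t" "t < 1"
  shows "(1 - t) *\<^sub>R x + t *\<^sub>R y \<in> cor C"
proof -
  have "(1 - t) *\<^sub>R x + t *\<^sub>R y \<in> C"
    using C x y t cor_subset by (intro convexD) auto
  moreover have "\<exists>l'>0. \<forall>l\<in>{0..l'}. (1 - t) *\<^sub>R x + t *\<^sub>R y + l *\<^sub>R w \<in> C" for w
  proof -
    obtain m where m: "m > 0" "\<forall>l\<in>{0..m}. x + l *\<^sub>R w \<in> C"
      using x unfolding cor_def by blast
    show ?thesis
    proof (intro exI[of _ "(1 - t) * m"] conjI ballI)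
      show "0 < (1 - t) * m" using m t by simp
    next
      fix l assume "l \<in> {0..(1 - t) * m}"
      then have "x + (l / (1 - t)) *\<^sub>R w \<in> C"
        using m(2) t by (auto simp: field_simps)
      then have "(1 - t) *\<^sub>R (x + (l / (1 - t)) *\<^sub>R w) + t *\<^sub>R y \<in> C"
        using C y t by (intro convexD) auto
      moreover have "(1 - t) *\<^sub>R (x + (l / (1 - t)) *\<^sub>R w) = (1 - t) *\<^sub>R x + l *\<^sub>R w"
        using t by (simp add: scaleR_right_distrib)
      ultimately show "(1 - t) *\<^sub>R x + t *\<^sub>R y + l *\<^sub>R w \<in> C"
        by (simp add: add_ac)
    qed
  qed
  ultimately show ?thesis unfolding cor_def by blast
qed

lemma convex_cor:
  assumes "convex C"
  shows "convex (cor C)"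
proof (rule convexI)
  fix x y and u v :: real
  assume x: "x \<in> cor C" and y: "y \<in> cor C" and uv: "0 \<le> u" "0 \<le> v" "u + v = 1"
  show "u *\<^sub>R x + v *\<^sub>R y \<in> cor C"
  proof (cases "v = 1")
    case True
    then show ?thesis using uv y by simp
  next
    case False
    then have "v < 1" "u = 1 - v" using uv by auto
    then show ?thesis using convex_cor_segment[OF assms x _ uv(2)] y cor_subset by blast
  qed
qed

lemma cor_cor:
  assumes C: "convex C"
  shows "cor (cor C) = cor C"
proof
  show "cor C \<subseteq> cor (cor C)"
  proof
    fix x assume x: "x \<in> cor C"
    have "\<exists>l'>0. \<forall>l\<in>{0..l'}. x + l *\<^sub>R w \<in> cor C" for w
    proof -
      obtain m where m: "m > 0" "\<forall>l\<in>{0..m}. x + l *\<^sub>R w \<in> C"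
        using x unfolding cor_def by blast
      show ?thesis
      proof (intro exI[of _ "m / 2"] conjI ballI)
        show "0 < m / 2" using m by simp
      next
        fix l assume "l \<in> {0..m/2}"
        then have t: "0 \<le> l / m" "l / m < 1" using m by (auto simp: field_simps)
        have "(1 - l / m) *\<^sub>R x + (l / m) *\<^sub>R (x + m *\<^sub>R w) \<in> cor C"
          using m by (intro convex_cor_segment[OF C x _ t]) auto
        then show "x + l *\<^sub>R w \<in> cor C"
          using m by (simp add: algebra_simps)
      qed
    qed
    then show "x \<in> cor (cor C)" using x unfolding cor_def by blast
  qed
qed (rule cor_subset)

lemma core_convex_open_cor:
  assumes "convex C"
  shows "core_convex_open (cor C)"
  unfolding core_convex_open_def
  using convex_cor[OF assms] cor_cor[OF assms] by (intro exI[of _ "{cor C}"]) auto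

lemma convex_Union_chain:
  assumes "\<And>X. X \<in> K \<Longrightarrow> convex X" and "subset.chain UNIV K"
  shows "convex (\<Union>K)"
proof (rule convexI)
  fix x y and u v :: real
  assume "x \<in> \<Union>K" "y \<in> \<Union>K" and uv: "0 \<le> u" "0 \<le> v" "u + v = 1"
  then obtain X Y where XY: "X \<in> K" "Y \<in> K" "x \<in> X" "y \<in> Y" by blast
  then have "X \<subseteq> Y \<or> Y \<subseteq> X" using assms(2) unfolding subset.chain_def by blast
  then obtain Z where Z: "Z \<in> K" "x \<in> Z" "y \<in> Z" using XY by blast
  then have "u *\<^sub>R x + v *\<^sub>R y \<in> Z" using assms(1) uv by (intro convexD) auto
  then show "u *\<^sub>R x + v *\<^sub>R y \<in> \<Union>K" using Z by blast
qed

lemma convex_subset_convex_component: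
  assumes "convex B" "B \<subseteq> A"
  obtains C where "C \<in> convex_components A" "B \<subseteq> C"
proof -
  let ?F = "{D. B \<subseteq> D \<and> D \<subseteq> A \<and> convex D}"
  have "\<exists>M\<in>?F. \<forall>X\<in>?F. M \<subseteq> X \<longrightarrow> X = M"
  proof (rule subset_Zorn_nonempty)
    show "?F \<noteq> {}" using assms by blast
  next
    fix K assume "K \<noteq> {}" "subset.chain ?F K"
    moreover have "convex (\<Union>K)"
      using \<open>subset.chain ?F K\<close> by (intro convex_Union_chain) (auto simp: subset.chain_def)
    ultimately show "\<Union>K \<in> ?F" by (auto simp: subset.chain_def)
  qed
  then obtain M where "M \<in> ?F" "\<forall>X\<in>?F. M \<subseteq> X \<longrightarrow> X = M" by blast
  then show ?thesis
    by (intro that[of M]) (auto simp: convex_components_def)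
qed

lemma core_convex_open_subset_cor_components:
  assumes "core_convex_open T" "T \<subseteq> A"
  shows "T \<subseteq> \<Union> (cor ` convex_components A)"
proof
  fix x assume "x \<in> T"
  obtain F where F: "\<forall>B\<in>F. convex B \<and> cor B = B" "T = \<Union>F"
    using assms(1) unfolding core_convex_open_def by blast
  then obtain B where B: "B \<in> F" "x \<in> B" using \<open>x \<in> T\<close> by blast
  then have "convex B" "cor B = B" "B \<subseteq> A" using F assms(2) by auto
  then obtain C where "C \<in> convex_components A" "B \<subseteq> C"
    using convex_subset_convex_component by metis
  then show "x \<in> \<Union> (cor ` convex_components A)"
    using cor_mono[of B C] \<open>cor B = B\<close> B(2) by blast
qed

theorem theorem3p8:
  fixes A :: "'a::real_vector set"
  assumes "A \<noteq> {}"
  shows "int_c A = \<Union> (cor ` convex_components A)"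
proof
  show "int_c A \<subseteq> \<Union> (cor ` convex_components A)"
    unfolding int_c_def interior_of_def openin_core_convex_topology
    using core_convex_open_subset_cor_components by blast
next
  have "cor C \<subseteq> int_c A" if "C \<in> convex_components A" for C
  proof -
    have "convex C" "C \<subseteq> A" using that unfolding convex_components_def by auto
    then show ?thesis
      unfolding int_c_def interior_of_def openin_core_convex_topology
      using core_convex_open_cor cor_subset by blast
  qed
  then show "\<Union> (cor ` convex_components A) \<subseteq> int_c A" by blast
qed

end
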